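(* In the setting described in the context, $\displaystyle\sum_{i=0}^{t-1}w_i^2=\frac{q^2+(t+1)q+1}{t}$.
   Context: Let $q=p^h$ with $p$ prime, $h\ge1$. Let $\alpha$ be a primitive element of $\mathbb{F}_{q^3}$; the points of $PG(2,q)$ are the 1-dimensional $\mathbb{F}_q$-subspaces of $\mathbb{F}_{q^3}$, and $P_i$ denotes the point represented by $\alpha^i$, so $PG(2,q)=\{P_0,\dots,P_{q^2+q}\}$. Let $\tau:P_i\mapsto P_{ip\bmod(q^2+q+1)}$ (a collineation) and let $\ell_0$ be a line of $PG(2,q)$ fixed by $\tau$. Let $t$ be a positive divisor of $q^2+q+1$ and for $i=0,\dots,t-1$ let $O_i=\{P_u:u\equiv i\pmod t\}$. For $u=0,\dots,t-1$ let $w_u=|\ell_0\cap O_u|$. *)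

theory Defs
  imports Complex_Main "HOL-Computational_Algebra.Primes"
begin

(* The subfield F_q of a field of order q^3: its unique subfield of order q. *)
definition subfield_Fq :: "nat \<Rightarrow> 'a::field set" where
  "subfield_Fq q = {x. x ^ q = x}"

definition primitive_elem :: "'a::field \<Rightarrow> bool" where
  "primitive_elem \<alpha> \<longleftrightarrow> (\<forall>x. x \<noteq> 0 \<longrightarrow> (\<exists>n::nat. x = \<alpha> ^ n))"

(* the point P_i: the 1-dimensional F_q-subspace spanned by alpha^i *)
definition proj_point :: "nat \<Rightarrow> 'a::field \<Rightarrow> nat \<Rightarrow> 'a set" where
  "proj_point q \<alpha> i = {c * \<alpha> ^ i | c. c \<in> subfield_Fq q}"

(* A line of PG(2,q), given as the set of indices k in {0..q^2+q} of the points
   P_k it contains: the points of the F_q-span of two distinct points P_i, P_j. *)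
definition is_line :: "nat \<Rightarrow> 'a::field \<Rightarrow> nat set \<Rightarrow> bool" where
  "is_line q \<alpha> L \<longleftrightarrow>
     (\<exists>i j. i < q^2+q+1 \<and> j < q^2+q+1 \<and> proj_point q \<alpha> i \<noteq> proj_point q \<alpha> j \<and>
        L = {k. k < q^2+q+1 \<and>
               (\<exists>a \<in> subfield_Fq q. \<exists>b \<in> subfield_Fq q. \<alpha> ^ k = a * \<alpha> ^ i + b * \<alpha> ^ j)})"

definition tau_idx :: "nat \<Rightarrow> nat \<Rightarrow> nat \<Rightarrow> nat" where
  "tau_idx p q i = (i * p) mod (q^2+q+1)"

end

theory Submission
  imports Defs "HOL-Number_Theory.Residues" "HOL-Library.Cardinality"
begin

(*
  Read through the Singer cycle P_k = <alpha^k>, a line of PG(2,q) becomes the index set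
  L = {k < n. alpha^k \<in> V} of a 2-dimensional F_q-subspace V of F_(q^3), where n = q^2+q+1.
  This L is a planar difference set modulo n: if k1 + k2' = k2 + k1' (mod n) with k1 \<noteq> k2,
  then gamma = alpha^(k1' - k1) maps the basis alpha^k1, alpha^k2 of V into V, so gamma is a root
  of a quadratic over F_q; as F_(q^3) has no quadratic subextension, gamma \<in> F_q and k1 = k1'.
  Hence each nonzero residue mod n is exactly one difference of two points of the line, and
  sum_u w_u^2 counts the q+1 diagonal pairs plus the n/t - 1 nonzero multiples of t below n,
  giving q + n/t.
*)

section \<open>The subfield fixed by a power of the Frobenius map\<close>

context
  fixes q h :: nat
  assumes prime_char: "prime CHAR('a::field)" and q_char_power: "q = CHAR('a) ^ h"
begin

lemma frobenius_add: "(x + y) ^ q = x ^ q + (y :: 'a) ^ q"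
  using prime_char q_char_power by (rule freshmans_dream')

lemma frobenius_uminus: "(- x) ^ q = - ((x :: 'a) ^ q)"
proof -
  have "q > 0"
    using prime_char q_char_power by (simp add: prime_gt_0_nat)
  then have "x ^ q + (- x) ^ q = 0"
    by (simp flip: frobenius_add)
  then show ?thesis
    by (simp add: eq_neg_iff_add_eq_0 add.commute)
qed

lemma subfield_Fq_0: "(0 :: 'a) \<in> subfield_Fq q"
  using prime_char q_char_power by (simp add: subfield_Fq_def prime_gt_0_nat)

lemma subfield_Fq_add: "x \<in> subfield_Fq q \<Longrightarrow> y \<in> subfield_Fq q \<Longrightarrow> x + (y :: 'a) \<in> subfield_Fq q"
  by (simp add: subfield_Fq_def frobenius_add)

lemma subfield_Fq_uminus: "x \<in> subfield_Fq q \<Longrightarrow> - (x :: 'a) \<in> subfield_Fq q"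
  by (simp add: subfield_Fq_def frobenius_uminus)

lemma subfield_Fq_diff: "x \<in> subfield_Fq q \<Longrightarrow> y \<in> subfield_Fq q \<Longrightarrow> x - (y :: 'a) \<in> subfield_Fq q"
  unfolding diff_conv_add_uminus by (intro subfield_Fq_add subfield_Fq_uminus)

end

lemma subfield_Fq_mult: "x \<in> subfield_Fq q \<Longrightarrow> y \<in> subfield_Fq q \<Longrightarrow> x * (y :: 'a::field) \<in> subfield_Fq q"
  by (simp add: subfield_Fq_def power_mult_distrib)

lemma subfield_Fq_inverse: "x \<in> subfield_Fq q \<Longrightarrow> inverse (x :: 'a::field) \<in> subfield_Fq q"
  by (simp add: subfield_Fq_def power_inverse)

lemma subfield_Fq_divide: "x \<in> subfield_Fq q \<Longrightarrow> y \<in> subfield_Fq q \<Longrightarrow> x / (y :: 'a::field) \<in> subfield_Fq q"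
  unfolding divide_inverse by (intro subfield_Fq_mult subfield_Fq_inverse)

section \<open>Finite fields and primitive elements\<close>

lemma two_le_card_field: "2 \<le> CARD('a::{field,finite})"
  using card_mono[of UNIV "{0, 1 :: 'a}"] by simp

lemma power_card_minus_one_eq_one:
  assumes "(x :: 'a::{field,finite}) \<noteq> 0"
  shows "x ^ (CARD('a) - 1) = 1"
proof -
  let ?S = "UNIV - {0::'a}"
  have "(\<Prod>y\<in>?S. x * y) = (\<Prod>y\<in>?S. y)"
    by (rule prod.reindex_bij_witness[of _ "\<lambda>y. y / x" "\<lambda>y. x * y"]) (use assms in auto)
  moreover have "(\<Prod>y\<in>?S. x * y) = x ^ card ?S * \<Prod>?S"
    by (simp add: prod.distrib)
  moreover have "\<Prod>?S \<noteq> 0"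
    by (simp add: prod_zero_iff)
  ultimately show ?thesis
    by (simp add: card_Diff_singleton)
qed

lemma power_card_eq_self: "(x :: 'a::{field,finite}) ^ CARD('a) = x"
proof (cases "x = 0")
  case False
  have "CARD('a) = Suc (CARD('a) - 1)"
    using two_le_card_field[where 'a = 'a] by simp
  then have "x ^ CARD('a) = x ^ (CARD('a) - 1) * x"
    by (metis power_Suc2)
  then show ?thesis
    using power_card_minus_one_eq_one[OF False] by simp
qed (use two_le_card_field[where 'a = 'a] in simp)

lemma CHAR_eq_if_card_eq_prime_power:
  assumes "prime p" and "CARD('a::{field,finite}) = p ^ k"
  shows "CHAR('a) = p"
proof -
  have prime_char: "prime CHAR('a)"
    by (intro prime_CHAR_semidom finite_imp_CHAR_pos) simp
  have "CHAR('a) dvd p ^ k"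
    using CHAR_dvd_CARD[where 'a = 'a] assms(2) by simp
  then have "CHAR('a) dvd p"
    by (rule prime_dvd_power[OF prime_char])
  then show ?thesis
    using prime_char assms(1) primes_dvd_imp_eq by blast
qed

lemma primitive_elem_nonzero:
  assumes "primitive_elem (\<alpha> :: 'a::{field,finite})" and "CARD('a) > 2"
  shows "\<alpha> \<noteq> 0"
proof
  assume "\<alpha> = 0"
  have "x \<in> {0, 1}" for x :: 'a
  proof (cases "x = 0")
    case False
    then obtain k where "x = \<alpha> ^ k"
      using assms(1) unfolding primitive_elem_def by blast
    with \<open>\<alpha> = 0\<close> show ?thesis
      by (cases k) auto
  qed simp
  then have "CARD('a) \<le> card {0, 1 :: 'a}"
    by (intro card_mono) auto
  then show False
    using assms(2) by simp
qed

lemma primitive_elem_power_eq_iff: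
  assumes "primitive_elem (\<alpha> :: 'a::{field,finite})" and "\<alpha> \<noteq> 0"
  shows "\<alpha> ^ a = \<alpha> ^ b \<longleftrightarrow> [a = b] (mod CARD('a) - 1)"
proof -
  let ?M = "CARD('a) - 1"
  have M_pos: "?M > 0"
    using two_le_card_field[where 'a = 'a] by simp
  have power_mod: "\<alpha> ^ m = \<alpha> ^ (m mod ?M)" for m
  proof -
    have "\<alpha> ^ m = (\<alpha> ^ ?M) ^ (m div ?M) * \<alpha> ^ (m mod ?M)"
      by (simp flip: power_mult power_add)
    also have "\<alpha> ^ ?M = 1"
      using assms(2) by (rule power_card_minus_one_eq_one)
    finally show ?thesis
      by simp
  qed
  have "(\<lambda>k. \<alpha> ^ k) ` {..<?M} = UNIV - {0}"
  proof
    show "UNIV - {0} \<subseteq> (\<lambda>k. \<alpha> ^ k) ` {..<?M}"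
    proof
      fix x :: 'a
      assume "x \<in> UNIV - {0}"
      then obtain k where "x = \<alpha> ^ k"
        using assms(1) unfolding primitive_elem_def by blast
      then show "x \<in> (\<lambda>k. \<alpha> ^ k) ` {..<?M}"
        using power_mod M_pos by (intro image_eqI[of _ _ "k mod ?M"]) auto
    qed
  qed (use assms(2) in auto)
  then have "inj_on (\<lambda>k. \<alpha> ^ k) {..<?M}"
    by (intro eq_card_imp_inj_on) (simp_all add: card_Diff_singleton)
  then have "\<alpha> ^ (a mod ?M) = \<alpha> ^ (b mod ?M) \<longleftrightarrow> a mod ?M = b mod ?M"
    using M_pos by (auto dest: inj_onD)
  then show ?thesis
    unfolding cong_def by (metis power_mod)
qed

section \<open>Planar difference sets\<close>

text \<open>For \<open>k' < n\<close>, \<open>diff_mod n k k'\<close> is the residue of \<open>k - k'\<close>, written so as to avoid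
  truncated subtraction.\<close>
definition diff_mod :: "nat \<Rightarrow> nat \<Rightarrow> nat \<Rightarrow> nat" where
  "diff_mod n k k' = (k + n - k') mod n"

definition difference_set :: "nat \<Rightarrow> nat set \<Rightarrow> bool" where
  "difference_set n L \<longleftrightarrow> L \<subseteq> {..<n} \<and>
     bij_betw (\<lambda>(k, k'). diff_mod n k k') {(k, k'). k \<in> L \<and> k' \<in> L \<and> k \<noteq> k'} {1..<n}"

lemma diff_mod_eq_imp_cong:
  assumes "k1' < n" "k2' < n" and "diff_mod n k1 k1' = diff_mod n k2 k2'"
  shows "[k1 + k2' = k2 + k1'] (mod n)"
proof -
  have "[(k1 + n - k1') + (k1' + k2') = (k2 + n - k2') + (k1' + k2')] (mod n)"
    using assms(3) unfolding diff_mod_def cong_def by (metis mod_add_left_eq)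
  moreover have "(k1 + n - k1') + (k1' + k2') = (k1 + k2') + n"
    and "(k2 + n - k2') + (k1' + k2') = (k2 + k1') + n"
    using assms(1,2) by simp_all
  ultimately show ?thesis
    by (simp add: cong_add_rcancel_nat)
qed

lemma diff_mod_mem_nonzero_residues:
  assumes "k < n" "k' < n" "k \<noteq> k'"
  shows "diff_mod n k k' \<in> {1..<n}"
proof (cases "k' < k")
  case True
  then have "k + n - k' = n + (k - k')"
    by arith
  then have "diff_mod n k k' = (n + (k - k')) mod n"
    by (simp only: diff_mod_def)
  also have "\<dots> = k - k'"
    using assms(1) by simp
  finally show ?thesis
    using True assms(1) by auto
next
  case False
  then have "0 < k + n - k'" and "k + n - k' < n"
    using assms(2,3) by arith+
  then show ?thesis
    unfolding diff_mod_def by simp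
qed

lemma dvd_diff_mod_iff:
  assumes "t dvd n" and "k' < n"
  shows "t dvd diff_mod n k k' \<longleftrightarrow> k mod t = k' mod t"
proof -
  have "t dvd diff_mod n k k' \<longleftrightarrow> t dvd k + n - k'"
    unfolding diff_mod_def using assms(1) by (simp add: dvd_mod_iff)
  also have "\<dots> \<longleftrightarrow> (k + n) mod t = k' mod t"
    using assms(2) by (intro mod_eq_dvd_iff_nat[symmetric]) simp
  also have "(k + n) mod t = k mod t"
    using assms(1) by (auto elim: dvdE)
  finally show ?thesis .
qed

lemma card_off_diagonal:
  assumes "finite L"
  shows "card {(k, k'). k \<in> L \<and> k' \<in> L \<and> k \<noteq> k'} = card L * (card L - 1)"
proof -
  let ?I = "(\<lambda>k. (k, k)) ` L" and ?D = "{(k, k'). k \<in> L \<and> k' \<in> L \<and> k \<noteq> k'}"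
  have "finite ?D"
    by (rule finite_subset[of _ "L \<times> L"]) (use assms in auto)
  have "card L * card L = card (L \<times> L)"
    by (simp add: card_cartesian_product)
  also have "L \<times> L = ?I \<union> ?D"
    by auto
  also have "card (?I \<union> ?D) = card ?I + card ?D"
    by (rule card_Un_disjoint) (use assms \<open>finite ?D\<close> in auto)
  also have "card ?I = card L"
    by (simp add: card_image inj_on_def)
  finally show ?thesis
    by (simp add: diff_mult_distrib2)
qed

lemma difference_setI:
  assumes sub: "L \<subseteq> {..<n}" and card: "card L * (card L - 1) = n - 1"
    and distinct_differences: "\<And>k1 k1' k2 k2'. k1 \<in> L \<Longrightarrow> k1' \<in> L \<Longrightarrow> k2 \<in> L \<Longrightarrow> k2' \<in> L \<Longrightarrow>
      k1 \<noteq> k1' \<Longrightarrow> [k1 + k2' = k2 + k1'] (mod n) \<Longrightarrow> k1 = k2 \<and> k1' = k2'"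
  shows "difference_set n L"
proof -
  let ?D = "{(k, k'). k \<in> L \<and> k' \<in> L \<and> k \<noteq> k'}" and ?f = "\<lambda>(k, k'). diff_mod n k k'"
  have "finite L"
    using sub finite_subset by blast
  have inj: "inj_on ?f ?D"
  proof (rule inj_onI)
    fix x y
    assume "x \<in> ?D" "y \<in> ?D" "?f x = ?f y"
    then obtain k1 k1' k2 k2' where xy: "x = (k1, k1')" "y = (k2, k2')"
      and mem: "k1 \<in> L" "k1' \<in> L" "k1 \<noteq> k1'" "k2 \<in> L" "k2' \<in> L"
      and eq: "diff_mod n k1 k1' = diff_mod n k2 k2'"
      by auto
    have "[k1 + k2' = k2 + k1'] (mod n)"
      using mem sub eq by (intro diff_mod_eq_imp_cong) auto
    then show "x = y"
      using distinct_differences[OF mem(1,2,4,5,3)] xy by simp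
  qed
  have "?f ` ?D \<subseteq> {1..<n}"
  proof
    fix d
    assume "d \<in> ?f ` ?D"
    then obtain k k' where "k \<in> L" "k' \<in> L" "k \<noteq> k'" "d = diff_mod n k k'"
      by auto
    then show "d \<in> {1..<n}"
      using sub diff_mod_mem_nonzero_residues[of k n k'] by blast
  qed
  moreover have "card (?f ` ?D) = card {1..<n}"
    using inj card \<open>finite L\<close> by (simp add: card_image card_off_diagonal)
  ultimately have "?f ` ?D = {1..<n}"
    by (intro card_subset_eq) auto
  with inj sub show ?thesis
    unfolding difference_set_def bij_betw_def by simp
qed

lemma card_multiples_below:
  fixes t n r :: nat
  assumes "t > 0" and "n = t * r"
  shows "card {d \<in> {1..<n}. t dvd d} = r - 1"
proof -
  have "{d \<in> {1..<n}. t dvd d} = (\<lambda>s. t * s) ` {1..<r}"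
  proof (intro equalityI subsetI)
    fix d
    assume "d \<in> {d \<in> {1..<n}. t dvd d}"
    then obtain s where "d = t * s" and "1 \<le> t * s" "t * s < t * r"
      using assms(2) by (auto elim: dvdE)
    then have "d = t * s" "s \<in> {1..<r}"
      by (auto simp: Suc_le_eq)
    then show "d \<in> (\<lambda>s. t * s) ` {1..<r}"
      by blast
  next
    fix d
    assume "d \<in> (\<lambda>s. t * s) ` {1..<r}"
    then show "d \<in> {d \<in> {1..<n}. t dvd d}"
      using assms by (auto simp: Suc_le_eq)
  qed
  then show ?thesis
    using assms by (simp add: card_image inj_on_def)
qed

lemma sum_squares_card_residue_classes:
  fixes L :: "nat set" and t :: nat
  assumes "finite L" and "t > 0"
  shows "(\<Sum>u<t. (card {k \<in> L. k mod t = u})^2)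
           = card {(k, k'). k \<in> L \<and> k' \<in> L \<and> k mod t = k' mod t}"
proof -
  let ?A = "\<lambda>u. {k \<in> L. k mod t = u}"
  have "(\<Sum>u<t. (card (?A u))^2) = (\<Sum>u<t. card (?A u \<times> ?A u))"
    by (simp add: card_cartesian_product power2_eq_square)
  also have "\<dots> = card (\<Union>u<t. ?A u \<times> ?A u)"
    by (rule card_UN_disjoint[symmetric]) (use assms(1) in auto)
  also have "(\<Union>u<t. ?A u \<times> ?A u) = {(k, k'). k \<in> L \<and> k' \<in> L \<and> k mod t = k' mod t}"
    using assms(2) by auto
  finally show ?thesis .
qed

text \<open>Off the diagonal, the pairs in a common residue class modulo \<open>t\<close> correspond to the
  nonzero multiples of \<open>t\<close> below \<open>n\<close>.\<close>
lemma difference_set_sum_squares_residue_classes: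
  assumes "difference_set n L" and "t > 0" and "n = t * r"
  shows "(\<Sum>u<t. (card {k \<in> L. k mod t = u})^2) = card L + (r - 1)"
proof -
  define D where "D = {(k, k'). k \<in> L \<and> k' \<in> L \<and> k \<noteq> k'}"
  define f where "f = (\<lambda>(k, k'). diff_mod n k k')"
  have sub: "L \<subseteq> {..<n}" and bij: "bij_betw f D {1..<n}"
    using assms(1) unfolding difference_set_def D_def f_def by auto
  have fin: "finite L"
    using sub finite_subset by blast
  have "finite D"
    unfolding D_def by (rule finite_subset[of _ "L \<times> L"]) (use fin in auto)
  have same_class_iff: "k mod t = k' mod t \<longleftrightarrow> t dvd f (k, k')" if "k' \<in> L" for k k'
    using dvd_diff_mod_iff[of t n k' k] assms(3) sub that unfolding f_def by auto
  have "{(k, k'). k \<in> L \<and> k' \<in> L \<and> k mod t = k' mod t} = (\<lambda>k. (k, k)) ` L \<union> {x \<in> D. t dvd f x}"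
    using same_class_iff unfolding D_def by auto
  moreover have "card ((\<lambda>k. (k, k)) ` L \<union> {x \<in> D. t dvd f x})
      = card ((\<lambda>k. (k, k)) ` L) + card {x \<in> D. t dvd f x}"
    by (rule card_Un_disjoint) (use fin \<open>finite D\<close> in \<open>auto simp: D_def\<close>)
  moreover have "card ((\<lambda>k. (k, k)) ` L) = card L"
    by (simp add: card_image inj_on_def)
  moreover have "card {x \<in> D. t dvd f x} = card {d \<in> {1..<n}. t dvd d}"
  proof -
    have "inj_on f {x \<in> D. t dvd f x}"
      by (rule inj_on_subset[OF bij_betw_imp_inj_on[OF bij]]) auto
    moreover have "f ` {x \<in> D. t dvd f x} = {d \<in> {1..<n}. t dvd d}"
      using bij_betw_imp_surj_on[OF bij] by auto
    ultimately show ?thesis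
      by (metis card_image)
  qed
  ultimately show ?thesis
    using sum_squares_card_residue_classes[OF fin assms(2)] card_multiples_below[OF assms(2,3)]
    by simp
qed

section \<open>Lines of PG(2,q) as difference sets\<close>

locale singer_field =
  fixes p h q :: nat and \<alpha> :: "'a::{field,finite}"
  assumes prime_p: "prime p" and h_pos: "h \<ge> 1" and q_def: "q = p ^ h"
    and card_field: "CARD('a) = q ^ 3" and primitive: "primitive_elem \<alpha>"
begin

abbreviation F :: "'a set" where "F \<equiv> subfield_Fq q"
abbreviation n :: nat where "n \<equiv> q^2 + q + 1"

lemma two_le_q: "2 \<le> q"
proof -
  have "p \<le> p ^ h"
    using h_pos prime_gt_0_nat[OF prime_p] by (simp add: self_le_power)
  then show ?thesis
    using prime_ge_2_nat[OF prime_p] q_def by simp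
qed

lemma CHAR_eq: "CHAR('a) = p"
  by (rule CHAR_eq_if_card_eq_prime_power[OF prime_p, of "h * 3"]) (simp add: card_field q_def power_mult)

lemma q_CHAR_power: "q = CHAR('a) ^ h"
  by (simp add: CHAR_eq q_def)

lemma prime_CHAR: "prime CHAR('a)"
  by (simp add: CHAR_eq prime_p)

lemmas F_0 = subfield_Fq_0[OF prime_CHAR q_CHAR_power]
  and F_add = subfield_Fq_add[OF prime_CHAR q_CHAR_power]
  and F_diff = subfield_Fq_diff[OF prime_CHAR q_CHAR_power]
  and F_uminus = subfield_Fq_uminus[OF prime_CHAR q_CHAR_power]
  and q_power_add = frobenius_add[OF prime_CHAR q_CHAR_power]
  and q_power_uminus = frobenius_uminus[OF prime_CHAR q_CHAR_power]

lemma card_minus_one_eq: "CARD('a) - 1 = n * (q - 1)"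
proof -
  have "q ^ 3 = n * (q - 1) + 1"
    using two_le_q by (cases q) (simp_all add: algebra_simps power2_eq_square power3_eq_cube)
  then show ?thesis
    by (simp add: card_field)
qed

lemma alpha_nonzero: "\<alpha> \<noteq> 0"
proof -
  have "2 ^ 3 \<le> q ^ 3"
    using two_le_q by (rule power_mono) simp
  then show ?thesis
    using primitive card_field by (intro primitive_elem_nonzero) simp_all
qed

lemma alpha_power_eq_iff: "\<alpha> ^ a = \<alpha> ^ b \<longleftrightarrow> [a = b] (mod n * (q - 1))"
  unfolding card_minus_one_eq[symmetric] by (rule primitive_elem_power_eq_iff[OF primitive alpha_nonzero])

lemma alpha_power_mem_F_iff: "\<alpha> ^ m \<in> F \<longleftrightarrow> n dvd m"
proof -
  have diff: "m * q - m = m * (q - 1)"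
    by (simp add: diff_mult_distrib2)
  have "\<alpha> ^ m \<in> F \<longleftrightarrow> \<alpha> ^ (m * q) = \<alpha> ^ m"
    by (simp add: subfield_Fq_def power_mult)
  also have "\<dots> \<longleftrightarrow> [m * q = m] (mod n * (q - 1))"
    by (rule alpha_power_eq_iff)
  also have "\<dots> \<longleftrightarrow> n * (q - 1) dvd m * (q - 1)"
    unfolding diff[symmetric] by (rule cong_altdef_nat) (use two_le_q in simp)
  also have "\<dots> \<longleftrightarrow> n dvd m"
    by (rule dvd_times_right_cancel_iff) (use two_le_q in simp)
  finally show ?thesis .
qed

lemma scalar_multiple_of_power_imp_cong:
  assumes "c \<in> F" and "\<alpha> ^ a = c * \<alpha> ^ b"
  shows "[a = b] (mod n)"
proof -
  have "c \<noteq> 0"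
    using assms(2) alpha_nonzero by auto
  then obtain m where m: "c = \<alpha> ^ m"
    using primitive unfolding primitive_elem_def by blast
  obtain k where "m = n * k"
    using assms(1) alpha_power_mem_F_iff m by (auto elim: dvdE)
  then have "\<alpha> ^ a = \<alpha> ^ (n * k + b)"
    using assms(2) by (simp add: m power_add)
  then have "[a = n * k + b] (mod n * (q - 1))"
    by (simp add: alpha_power_eq_iff)
  then have "[a = n * k + b] (mod n)"
    by (rule cong_modulus_mult_nat)
  then show ?thesis
    by (simp only: cong_def mod_mult_self4)
qed

lemma cong_imp_scalar_multiple_of_power:
  assumes "[a = b] (mod n)"
  shows "\<exists>c\<in>F. \<alpha> ^ a = c * \<alpha> ^ b"
proof -
  have le_case: "\<exists>c\<in>F. \<alpha> ^ a = c * \<alpha> ^ b" if "[a = b] (mod n)" "b \<le> a" for a b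
  proof -
    have "\<alpha> ^ (a - b) \<in> F"
      using that by (simp add: alpha_power_mem_F_iff cong_altdef_nat)
    moreover have "\<alpha> ^ a = \<alpha> ^ (a - b) * \<alpha> ^ b"
      using that(2) by (simp flip: power_add)
    ultimately show ?thesis
      by blast
  qed
  show ?thesis
  proof (cases "b \<le> a")
    case False
    then obtain c where "c \<in> F" and c: "\<alpha> ^ b = c * \<alpha> ^ a"
      using le_case[of b a] assms by (auto simp: cong_sym_eq)
    then have "\<alpha> ^ a = inverse c * \<alpha> ^ b"
      using alpha_nonzero by (auto simp: field_simps)
    with \<open>c \<in> F\<close> show ?thesis
      using subfield_Fq_inverse by blast
  qed (use assms le_case in blast)
qed

lemma F_minus_zero_eq_powers: "F - {0} = (\<lambda>s. \<alpha> ^ (n * s)) ` {..<q - 1}"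
proof (intro equalityI subsetI)
  fix x
  assume x: "x \<in> F - {0}"
  then obtain m where m: "x = \<alpha> ^ m"
    using primitive unfolding primitive_elem_def by blast
  then have "n dvd m"
    using x alpha_power_mem_F_iff by blast
  then obtain k where "m = n * k"
    by (rule dvdE)
  moreover have "[n * k = n * (k mod (q - 1))] (mod n * (q - 1))"
    unfolding cong_def by (simp only: mult_mod_right[symmetric] mod_mod_trivial)
  ultimately have "x = \<alpha> ^ (n * (k mod (q - 1)))"
    unfolding m by (simp only: alpha_power_eq_iff)
  moreover have "k mod (q - 1) < q - 1"
    using two_le_q by simp
  ultimately show "x \<in> (\<lambda>s. \<alpha> ^ (n * s)) ` {..<q - 1}"
    by blast
next
  fix x
  assume "x \<in> (\<lambda>s. \<alpha> ^ (n * s)) ` {..<q - 1}"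
  then obtain s where "x = \<alpha> ^ (n * s)"
    by blast
  moreover have "\<alpha> ^ (n * s) \<in> F"
    by (simp only: alpha_power_mem_F_iff dvd_triv_left)
  ultimately show "x \<in> F - {0}"
    using alpha_nonzero by simp
qed

lemma card_F: "card F = q"
proof -
  note F_minus_zero_eq_powers
  moreover have "inj_on (\<lambda>s. \<alpha> ^ (n * s)) {..<q - 1}"
  proof (rule inj_onI)
    fix s s'
    assume "s \<in> {..<q - 1}" "s' \<in> {..<q - 1}" "\<alpha> ^ (n * s) = \<alpha> ^ (n * s')"
    then have "n * (s mod (q - 1)) = n * (s' mod (q - 1))"
      unfolding alpha_power_eq_iff cong_def by (simp only: mult_mod_right)
    with \<open>s \<in> {..<q - 1}\<close> \<open>s' \<in> {..<q - 1}\<close> have "n * s = n * s'"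
      by (simp only: lessThan_iff mod_less)
    moreover have "n \<noteq> 0"
      by simp
    ultimately show "s = s'"
      by (metis mult_left_cancel)
  qed
  ultimately have "card (F - {0}) = q - 1"
    by (simp add: card_image)
  then show ?thesis
    using F_0 two_le_q by (simp add: card_Diff_singleton)
qed

definition Fspan :: "'a \<Rightarrow> 'a \<Rightarrow> 'a set" where
  "Fspan u v = {a * u + b * v | a b. a \<in> F \<and> b \<in> F}"

lemma Fspan_memI: "a \<in> F \<Longrightarrow> b \<in> F \<Longrightarrow> a * u + b * v \<in> Fspan u v"
  unfolding Fspan_def by blast

lemma Fspan_smult:
  assumes "c \<in> F" and "x \<in> Fspan u v"
  shows "c * x \<in> Fspan u v"
proof -
  obtain a b where "a \<in> F" "b \<in> F" "x = a * u + b * v"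
    using assms(2) unfolding Fspan_def by blast
  moreover from this have "c * x = (c * a) * u + (c * b) * v"
    by (simp add: algebra_simps)
  ultimately show ?thesis
    using assms(1) by (simp add: Fspan_memI subfield_Fq_mult)
qed

lemma Fspan_add:
  assumes "x \<in> Fspan u v" and "y \<in> Fspan u v"
  shows "x + y \<in> Fspan u v"
proof -
  obtain a b a' b' where "a \<in> F" "b \<in> F" "x = a * u + b * v"
    and "a' \<in> F" "b' \<in> F" "y = a' * u + b' * v"
    using assms unfolding Fspan_def by blast
  moreover from this have "x + y = (a + a') * u + (b + b') * v"
    by (simp add: algebra_simps)
  ultimately show ?thesis
    by (simp add: Fspan_memI F_add)
qed

lemma Fspan_subset:
  assumes "x \<in> Fspan u v" and "y \<in> Fspan u v"
  shows "Fspan x y \<subseteq> Fspan u v"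
proof
  fix z
  assume "z \<in> Fspan x y"
  then obtain c d where "c \<in> F" "d \<in> F" and z: "z = c * x + d * y"
    unfolding Fspan_def by blast
  then show "z \<in> Fspan u v"
    using assms by (simp add: Fspan_add Fspan_smult)
qed

lemma card_Fspan:
  assumes indep: "\<And>a b. a \<in> F \<Longrightarrow> b \<in> F \<Longrightarrow> a * u + b * v = 0 \<Longrightarrow> a = 0 \<and> b = 0"
  shows "card (Fspan u v) = q^2"
proof -
  have "Fspan u v = (\<lambda>(a, b). a * u + b * v) ` (F \<times> F)"
    unfolding Fspan_def by auto
  moreover have "inj_on (\<lambda>(a, b). a * u + b * v) (F \<times> F)"
  proof (rule inj_onI, clarify)
    fix a b a' b'
    assume "a \<in> F" "b \<in> F" "a' \<in> F" "b' \<in> F" "a * u + b * v = a' * u + b' * v"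
    then have "(a - a') * u + (b - b') * v = 0" and "a - a' \<in> F" "b - b' \<in> F"
      by (simp_all add: algebra_simps F_diff)
    then show "a = a' \<and> b = b'"
      using indep by fastforce
  qed
  ultimately show ?thesis
    by (simp add: card_image card_cartesian_product card_F power2_eq_square)
qed

lemma powers_F_independent:
  assumes "k1 < n" "k2 < n" "k1 \<noteq> k2"
    and "a \<in> F" "b \<in> F" "a * \<alpha> ^ k1 + b * \<alpha> ^ k2 = 0"
  shows "a = 0 \<and> b = 0"
proof -
  have "b = 0"
  proof (rule ccontr)
    assume "b \<noteq> 0"
    then have "\<alpha> ^ k2 = (- a / b) * \<alpha> ^ k1"
      using assms(6) by (simp add: field_simps eq_neg_iff_add_eq_0 add.commute)
    moreover have "- a / b \<in> F"
      using assms(4,5) by (simp add: F_uminus subfield_Fq_divide)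
    ultimately have "[k2 = k1] (mod n)"
      by (rule scalar_multiple_of_power_imp_cong[rotated])
    with assms(1-3) show False
      by (simp add: cong_def)
  qed
  with assms(6) show ?thesis
    using alpha_nonzero by simp
qed

lemma card_Fspan_powers:
  assumes "k1 < n" "k2 < n" "k1 \<noteq> k2"
  shows "card (Fspan (\<alpha> ^ k1) (\<alpha> ^ k2)) = q^2"
  using powers_F_independent[OF assms] by (rule card_Fspan)

text \<open>If \<open>\<gamma> \<notin> F\<close>, its conjugate \<open>\<gamma>^q\<close> is the other root, so \<open>\<gamma>^(q^2) = \<gamma>\<close>; together with
  \<open>\<gamma>^(q^3) = \<gamma>\<close> this forces \<open>\<gamma>^q = \<gamma>\<close>.\<close>
lemma quadratic_root_mem_F:
  assumes "s \<in> F" and "r \<in> F" and root: "\<gamma> * \<gamma> + s * \<gamma> + r = 0"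
  shows "\<gamma> \<in> F"
proof (rule ccontr)
  assume "\<gamma> \<notin> F"
  define \<gamma>' where "\<gamma>' = \<gamma> ^ q"
  have "\<gamma>' \<noteq> \<gamma>"
    using \<open>\<gamma> \<notin> F\<close> by (simp add: \<gamma>'_def subfield_Fq_def)
  have "\<gamma>' * \<gamma>' + s * \<gamma>' + r = (\<gamma> * \<gamma> + s * \<gamma> + r) ^ q"
    using assms(1,2) by (simp add: \<gamma>'_def q_power_add power_mult_distrib subfield_Fq_def)
  also have "\<dots> = 0"
    using root two_le_q by simp
  finally have root': "\<gamma>' * \<gamma>' + s * \<gamma>' + r = 0" .
  have "(\<gamma>' - \<gamma>) * (\<gamma>' + \<gamma> + s) = (\<gamma>' * \<gamma>' + s * \<gamma>' + r) - (\<gamma> * \<gamma> + s * \<gamma> + r)"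
    by (simp add: algebra_simps)
  then have "(\<gamma>' - \<gamma>) * (\<gamma>' + \<gamma> + s) = 0"
    by (simp only: root root' diff_self)
  then have "\<gamma>' + \<gamma> + s = 0"
    using \<open>\<gamma>' \<noteq> \<gamma>\<close> by simp
  then have conj: "\<gamma>' = - \<gamma> - s"
    by (simp add: eq_diff_eq eq_neg_iff_add_eq_0 add_ac)
  have "\<gamma> ^ (q^2) = \<gamma>' ^ q"
    by (simp add: \<gamma>'_def power2_eq_square power_mult)
  also have "\<dots> = (- \<gamma> - s) ^ q"
    by (simp only: conj)
  also have "\<dots> = - (\<gamma> ^ q) - s ^ q"
    by (simp only: diff_conv_add_uminus q_power_add q_power_uminus)
  also have "\<dots> = \<gamma>"
    using assms(1) by (simp add: subfield_Fq_def conj flip: \<gamma>'_def)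
  finally have "\<gamma> ^ (q^2 * q) = \<gamma>'"
    by (simp add: \<gamma>'_def power_mult)
  moreover have "\<gamma> ^ (q^2 * q) = \<gamma>"
    using power_card_eq_self[of \<gamma>] card_field by (simp add: power2_eq_square power3_eq_cube)
  ultimately show False
    using \<open>\<gamma>' \<noteq> \<gamma>\<close> by simp
qed

lemma Fspan_stabilizer_mem_F:
  assumes "u \<noteq> 0" "v \<noteq> 0" and "\<gamma> * u \<in> Fspan u v" "\<gamma> * v \<in> Fspan u v"
  shows "\<gamma> \<in> F"
proof -
  obtain a1 b1 where F1: "a1 \<in> F" "b1 \<in> F" and "\<gamma> * u = a1 * u + b1 * v"
    using assms(3) unfolding Fspan_def by blast
  then have e1: "(\<gamma> - a1) * u = b1 * v"
    by (simp add: left_diff_distrib)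
  obtain a2 b2 where F2: "a2 \<in> F" "b2 \<in> F" and "\<gamma> * v = a2 * u + b2 * v"
    using assms(4) unfolding Fspan_def by blast
  then have e2: "(\<gamma> - b2) * v = a2 * u"
    by (simp add: left_diff_distrib)
  have "((\<gamma> - a1) * (\<gamma> - b2) - a2 * b1) * (u * v)
      = ((\<gamma> - a1) * u) * ((\<gamma> - b2) * v) - (b1 * v) * (a2 * u)"
    by (simp add: algebra_simps)
  also have "\<dots> = 0"
    by (simp only: e1 e2 diff_self)
  finally have "(\<gamma> - a1) * (\<gamma> - b2) - a2 * b1 = 0"
    using assms(1,2) by simp
  then have root: "\<gamma> * \<gamma> + (- (a1 + b2)) * \<gamma> + (a1 * b2 - a2 * b1) = 0"
    by (simp add: algebra_simps)
  show ?thesis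
  proof (rule quadratic_root_mem_F[OF _ _ root])
    show "- (a1 + b2) \<in> F"
      using F1 F2 by (intro F_uminus F_add)
    show "a1 * b2 - a2 * b1 \<in> F"
      using F1 F2 by (intro F_diff subfield_Fq_mult)
  qed
qed

lemma nonzero_eq_scalar_mult_power:
  assumes "x \<noteq> 0"
  obtains c k where "c \<in> F" "c \<noteq> 0" "k < n" "x = c * \<alpha> ^ k"
proof -
  obtain m where m: "x = \<alpha> ^ m"
    using assms primitive unfolding primitive_elem_def by blast
  have "\<alpha> ^ (n * (m div n)) \<in> F"
    by (simp only: alpha_power_mem_F_iff dvd_triv_left)
  moreover have "\<alpha> ^ (n * (m div n)) \<noteq> 0"
    using alpha_nonzero by simp
  moreover have "m mod n < n"
    by simp
  moreover have "x = \<alpha> ^ (n * (m div n)) * \<alpha> ^ (m mod n)"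
    unfolding m by (simp only: mult_div_mod_eq flip: power_add)
  ultimately show ?thesis
    by (rule that)
qed

definition line_points :: "nat \<Rightarrow> nat \<Rightarrow> nat set" where
  "line_points i j = {k. k < n \<and> \<alpha> ^ k \<in> Fspan (\<alpha> ^ i) (\<alpha> ^ j)}"

lemma inj_on_scalar_mult_line_points:
  "inj_on (\<lambda>(k, c). c * \<alpha> ^ k) (line_points i j \<times> (F - {0}))"
proof (rule inj_onI)
  fix x y
  assume "x \<in> line_points i j \<times> (F - {0})" "y \<in> line_points i j \<times> (F - {0})"
    and "(\<lambda>(k, c). c * \<alpha> ^ k) x = (\<lambda>(k, c). c * \<alpha> ^ k) y"
  moreover obtain k c k' c' where x: "x = (k, c)" and y: "y = (k', c')"
    by fastforce
  ultimately have "k < n" "k' < n" "c \<in> F" "c \<noteq> 0" "c' \<in> F"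
    and eq: "c * \<alpha> ^ k = c' * \<alpha> ^ k'"
    by (simp_all add: line_points_def)
  then have "\<alpha> ^ k = (c' / c) * \<alpha> ^ k'"
    using \<open>c \<noteq> 0\<close> by (simp add: field_simps)
  moreover have "c' / c \<in> F"
    using \<open>c' \<in> F\<close> \<open>c \<in> F\<close> by (rule subfield_Fq_divide)
  ultimately have "[k = k'] (mod n)"
    by (rule scalar_multiple_of_power_imp_cong[rotated])
  with \<open>k < n\<close> \<open>k' < n\<close> have "k = k'"
    by (simp add: cong_def)
  with eq show "x = y"
    using alpha_nonzero x y by simp
qed

lemma scalar_mult_line_points_eq:
  "(\<lambda>(k, c). c * \<alpha> ^ k) ` (line_points i j \<times> (F - {0})) = Fspan (\<alpha> ^ i) (\<alpha> ^ j) - {0}"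
proof (intro equalityI subsetI)
  fix x
  assume "x \<in> (\<lambda>(k, c). c * \<alpha> ^ k) ` (line_points i j \<times> (F - {0}))"
  then obtain k c where "k \<in> line_points i j" "c \<in> F" "c \<noteq> 0" and x: "x = c * \<alpha> ^ k"
    by auto
  then have "x \<in> Fspan (\<alpha> ^ i) (\<alpha> ^ j)"
    unfolding x line_points_def by (simp add: Fspan_smult)
  moreover have "x \<noteq> 0"
    unfolding x using \<open>c \<noteq> 0\<close> alpha_nonzero by simp
  ultimately show "x \<in> Fspan (\<alpha> ^ i) (\<alpha> ^ j) - {0}"
    by simp
next
  fix x
  assume x: "x \<in> Fspan (\<alpha> ^ i) (\<alpha> ^ j) - {0}"
  then obtain c k where "c \<in> F" "c \<noteq> 0" "k < n" and xk: "x = c * \<alpha> ^ k"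
    using nonzero_eq_scalar_mult_power by blast
  then have "\<alpha> ^ k = inverse c * x"
    by simp
  then have "\<alpha> ^ k \<in> Fspan (\<alpha> ^ i) (\<alpha> ^ j)"
    using x \<open>c \<in> F\<close> by (simp add: Fspan_smult subfield_Fq_inverse)
  with \<open>k < n\<close> \<open>c \<in> F\<close> \<open>c \<noteq> 0\<close> have "(k, c) \<in> line_points i j \<times> (F - {0})"
    by (simp add: line_points_def)
  moreover have "x = (\<lambda>(k, c). c * \<alpha> ^ k) (k, c)"
    by (simp add: xk)
  ultimately show "x \<in> (\<lambda>(k, c). c * \<alpha> ^ k) ` (line_points i j \<times> (F - {0}))"
    by (rule rev_image_eqI)
qed

lemma card_line_points:
  assumes "i < n" "j < n" "i \<noteq> j"
  shows "card (line_points i j) = q + 1"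
proof -
  let ?L = "line_points i j" and ?V = "Fspan (\<alpha> ^ i) (\<alpha> ^ j)"
  have "card (?L \<times> (F - {0})) = card (?V - {0})"
    using card_image[OF inj_on_scalar_mult_line_points] by (simp add: scalar_mult_line_points_eq)
  moreover have "card (?L \<times> (F - {0})) = card ?L * (q - 1)"
    by (simp add: card_cartesian_product card_Diff_singleton F_0 card_F)
  moreover have "card (?V - {0}) = (q + 1) * (q - 1)"
  proof -
    have "0 \<in> ?V"
      using Fspan_memI[OF F_0 F_0] by simp
    then show ?thesis
      using card_Fspan_powers[OF assms] by (simp add: card_Diff_singleton power2_eq_square algebra_simps)
  qed
  ultimately have "card ?L * (q - 1) = (q + 1) * (q - 1)"
    by simp
  moreover have "q - 1 \<noteq> 0"
    using two_le_q by simp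
  ultimately show ?thesis
    by (metis mult_right_cancel)
qed

lemma line_points_distinct_differences:
  assumes "i < n" "j < n" "i \<noteq> j"
    and mem: "k1 \<in> line_points i j" "k1' \<in> line_points i j" "k2 \<in> line_points i j" "k2' \<in> line_points i j"
    and "k1 \<noteq> k1'" and sum_cong: "[k1 + k2' = k2 + k1'] (mod n)"
  shows "k1 = k2 \<and> k1' = k2'"
proof (cases "k1 = k2")
  case True
  then have "[k2' = k1'] (mod n)"
    using sum_cong by (simp add: cong_add_lcancel_nat)
  with True mem(2,4) show ?thesis
    by (simp add: cong_def line_points_def)
next
  case False
  let ?V = "Fspan (\<alpha> ^ i) (\<alpha> ^ j)"
  have lt: "k1 < n" "k2 < n" and inV: "\<alpha> ^ k1 \<in> ?V" "\<alpha> ^ k2 \<in> ?V" "\<alpha> ^ k1' \<in> ?V" "\<alpha> ^ k2' \<in> ?V"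
    using mem unfolding line_points_def by auto
  have V_eq: "Fspan (\<alpha> ^ k1) (\<alpha> ^ k2) = ?V"
    by (rule card_subset_eq[OF _ Fspan_subset[OF inV(1,2)]])
       (simp_all add: card_Fspan_powers[OF lt False] card_Fspan_powers[OF assms(1-3)])
  define \<gamma> where "\<gamma> = \<alpha> ^ k1' / \<alpha> ^ k1"
  have \<gamma>1: "\<gamma> * \<alpha> ^ k1 = \<alpha> ^ k1'"
    using alpha_nonzero by (simp add: \<gamma>_def)
  obtain c where "c \<in> F" and c: "\<alpha> ^ (k2 + k1') = c * \<alpha> ^ (k1 + k2')"
    using cong_imp_scalar_multiple_of_power sum_cong by (metis cong_sym)
  have "\<gamma> * \<alpha> ^ k2 = c * \<alpha> ^ k2'"
    using c alpha_nonzero by (simp add: \<gamma>_def power_add field_simps)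
  then have "\<gamma> * \<alpha> ^ k2 \<in> ?V"
    using \<open>c \<in> F\<close> inV(4) by (simp add: Fspan_smult)
  moreover have "\<gamma> * \<alpha> ^ k1 \<in> ?V"
    using \<gamma>1 inV(3) by simp
  ultimately have "\<gamma> \<in> F"
    using alpha_nonzero V_eq by (intro Fspan_stabilizer_mem_F[of "\<alpha> ^ k1" "\<alpha> ^ k2"]) simp_all
  then have "[k1' = k1] (mod n)"
    using \<gamma>1[symmetric] by (rule scalar_multiple_of_power_imp_cong)
  with lt mem(2) \<open>k1 \<noteq> k1'\<close> show ?thesis
    by (simp add: cong_def line_points_def)
qed

lemma difference_set_line_points:
  assumes "i < n" "j < n" "i \<noteq> j"
  shows "difference_set n (line_points i j)"
proof (rule difference_setI)
  show "line_points i j \<subseteq> {..<n}"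
    by (auto simp: line_points_def)
  show "card (line_points i j) * (card (line_points i j) - 1) = n - 1"
    using card_line_points[OF assms] by (simp add: power2_eq_square)
qed (use line_points_distinct_differences[OF assms] in blast)

end

theorem lemma2:
  fixes p h q t :: nat and \<alpha> :: "'a::{field,finite}" and l0 :: "nat set"
    and w :: "nat \<Rightarrow> nat"
  assumes "prime p" and "h \<ge> 1" and "q = p ^ h"
    and "card (UNIV :: 'a set) = q ^ 3"
    and "primitive_elem \<alpha>"
    and "is_line q \<alpha> l0"
    and "tau_idx p q ` l0 = l0"
    and "t > 0" and "t dvd q^2+q+1"
    and "\<And>u. w u = card {k \<in> l0. k mod t = u}"
  shows "real (\<Sum>i<t. (w i)^2) = real (q^2 + (t+1)*q + 1) / real t"
proof -
  interpret singer_field p h q \<alpha>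
    using assms(1-5) by unfold_locales
  obtain i j where ij: "i < n" "j < n" "proj_point q \<alpha> i \<noteq> proj_point q \<alpha> j"
    and l0: "l0 = {k. k < n \<and> (\<exists>a \<in> F. \<exists>b \<in> F. \<alpha> ^ k = a * \<alpha> ^ i + b * \<alpha> ^ j)}"
    using assms(6) unfolding is_line_def by blast
  have "i \<noteq> j"
    using ij(3) by blast
  have "l0 = line_points i j"
    unfolding l0 line_points_def Fspan_def by blast
  obtain r where r: "n = t * r"
    using assms(9) by (rule dvdE)
  have "(\<Sum>i<t. (w i)^2) = (q + 1) + (r - 1)"
    using difference_set_sum_squares_residue_classes[OF difference_set_line_points[OF ij(1,2) \<open>i \<noteq> j\<close>] assms(8) r]
    by (simp add: assms(10) \<open>l0 = line_points i j\<close> card_line_points[OF ij(1,2) \<open>i \<noteq> j\<close>])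
  moreover have "r > 0"
    using r by (cases r) auto
  moreover have "q^2 + (t + 1) * q + 1 = t * (q + r)"
    using r by (simp add: algebra_simps)
  ultimately show ?thesis
    using assms(8) by simp
qed

end
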